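(* Every rectangular permutation $\pi$ can be expressed uniquely as $\pi=\psi_{x_m}\circ\cdots\circ\psi_{x_1}(e_0)$ for some $m\ge0$ and letters $x_1,\dots,x_m\in\{1,2,u,d\}$, where each operator $\psi_{x_j}$ is applied to a permutation in its domain.
   Context: A permutation is rectangular if it avoids the patterns $2413,2431,4213,4231$; $e_0$ is the empty permutation (size $0$). For $\pi\in S_n$ (one-line form) and $1\le i,j\le n+1$, $\rho_{i,j}(\pi)\in S_{n+1}$ is obtained by increasing by $1$ every entry $\ge i$ and inserting the value $i$ at position $j$. Operators: $\psi_1=\rho_{1,1}$, domain all rectangular permutations (including $e_0$); $\psi_2=\rho_{1,2}$, domain rectangular $\pi$ of size $\ge1$ with $\pi_1\ne1$; $\psi_u(\pi)=\rho_{\pi_1,1}(\pi)$, same domain as $\psi_2$; $\psi_d(\pi)=\rho_{\pi_1+1,1}(\pi)$, domain rectangular $\pi$ of size $\ge1$. *)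

theory Defs
  imports Main
begin

(* Permutations of size n in one-line form: lists of length n whose entries are
   exactly 1..n (values are 1-indexed, as in the paper). The empty list is e_0. *)
definition is_perm :: "nat list \<Rightarrow> bool" where
  "is_perm p \<longleftrightarrow> distinct p \<and> set p = {1..length p}"

definition contains :: "nat list \<Rightarrow> nat list \<Rightarrow> bool" where
  "contains p q \<longleftrightarrow>
     (\<exists>is. length is = length q \<and> sorted_wrt (<) is \<and> (\<forall>i\<in>set is. i < length p) \<and>
        (\<forall>a<length q. \<forall>b<length q. (p ! (is ! a) < p ! (is ! b)) \<longleftrightarrow> (q ! a < q ! b)))"

definition avoids :: "nat list \<Rightarrow> nat list \<Rightarrow> bool" where
  "avoids p q \<longleftrightarrow> \<not> contains p q"

definition rectangular :: "nat list \<Rightarrow> bool" where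
  "rectangular p \<longleftrightarrow> is_perm p \<and> avoids p [2,4,1,3] \<and> avoids p [2,4,3,1]
      \<and> avoids p [4,2,1,3] \<and> avoids p [4,2,3,1]"

definition rho :: "nat \<Rightarrow> nat \<Rightarrow> nat list \<Rightarrow> nat list" where
  "rho i j p = (let p' = map (\<lambda>x. if x \<ge> i then x + 1 else x) p
                in take (j - 1) p' @ [i] @ drop (j - 1) p')"

datatype letter = L1 | L2 | Lu | Ld

fun psi :: "letter \<Rightarrow> nat list \<Rightarrow> nat list option" where
  "psi L1 p = (if rectangular p then Some (rho 1 1 p) else None)"
| "psi L2 p = (if rectangular p \<and> p \<noteq> [] \<and> hd p \<noteq> 1 then Some (rho 1 2 p) else None)"
| "psi Lu p = (if rectangular p \<and> p \<noteq> [] \<and> hd p \<noteq> 1 then Some (rho (hd p) 1 p) else None)"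
| "psi Ld p = (if rectangular p \<and> p \<noteq> [] then Some (rho (hd p + 1) 1 p) else None)"

(* run [x_1,...,x_m] = psi_{x_m} o ... o psi_{x_1} (e_0), requiring each step to be in
   the domain of the operator applied *)
definition run :: "letter list \<Rightarrow> nat list option" where
  "run xs = foldl (\<lambda>acc x. Option.bind acc (psi x)) (Some []) xs"

end

theory Submission
  imports Defs
begin

(* Each operator inserts one new entry, at position 1 or 2, and the first two entries of the
   result reveal which operator was applied: psi_1 puts 1 first, psi_u makes the second entry
   one more than the first, psi_d one less, and psi_2 puts 1 second below a first entry of at
   least 3. Deleting the inserted entry and standardizing the rest (decompose) undoes the
   operator, which gives uniqueness. For existence, deleting an entry preserves pattern
   avoidance, and if neither of the first two entries of a rectangular permutation is 1, they
   are consecutive values: otherwise a value strictly between them, together with the entry 1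
   further right, would form one of 2413, 2431, 4213, 4231. So decompose maps every nonempty
   rectangular permutation to a shorter one from which an operator rebuilds it. *)

definition shift_up :: "nat \<Rightarrow> nat \<Rightarrow> nat" where
  "shift_up i x = (if i \<le> x then x + 1 else x)"

definition shift_down :: "nat \<Rightarrow> nat \<Rightarrow> nat" where
  "shift_down v x = (if v < x then x - 1 else x)"

lemma shift_down_shift_up [simp]: "shift_down i (shift_up i x) = x"
  by (simp add: shift_up_def shift_down_def)

lemma shift_up_shift_down [simp]: "x \<noteq> v \<Longrightarrow> shift_up v (shift_down v x) = x"
  by (auto simp: shift_up_def shift_down_def)

lemma shift_down_less_iff:
  "x \<noteq> v \<Longrightarrow> y \<noteq> v \<Longrightarrow> shift_down v x < shift_down v y \<longleftrightarrow> x < y"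
  by (auto simp: shift_down_def)

lemma inj_on_shift_down: "inj_on (shift_down v) (- {v})"
  by (auto simp: inj_on_def shift_down_def split: if_splits)

lemma shift_down_image:
  assumes "v \<in> {1..n}"
  shows "shift_down v ` ({1..n} - {v}) = {1..n - 1}"
proof
  show "shift_down v ` ({1..n} - {v}) \<subseteq> {1..n - 1}"
    using assms by (auto simp: shift_down_def)
  show "{1..n - 1} \<subseteq> shift_down v ` ({1..n} - {v})"
  proof
    fix y assume "y \<in> {1..n - 1}"
    then show "y \<in> shift_down v ` ({1..n} - {v})"
      using assms by (cases "y < v") (auto simp: shift_down_def image_iff intro!: bexI[of _ "Suc y"])
  qed
qed

lemma rho_conv: "rho i j p = take (j - 1) (map (shift_up i) p) @ i # drop (j - 1) (map (shift_up i) p)"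
  unfolding rho_def shift_up_def Let_def by simp

lemma length_rho [simp]: "length (rho i j p) = Suc (length p)"
  by (simp add: rho_def Let_def)

definition remove_nth :: "nat \<Rightarrow> 'a list \<Rightarrow> 'a list" where
  "remove_nth k xs = take k xs @ drop (Suc k) xs"

(* The inverse of rho: k is the 0-based position of the deleted entry, so
   rho (p ! k) (Suc k) undoes it. *)
definition delete_entry :: "nat \<Rightarrow> nat list \<Rightarrow> nat list" where
  "delete_entry k p = map (shift_down (p ! k)) (remove_nth k p)"

lemma length_delete_entry [simp]: "k < length p \<Longrightarrow> length (delete_entry k p) = length p - 1"
  by (simp add: delete_entry_def remove_nth_def)

lemma delete_entry_rho:
  assumes "k \<le> length p"
  shows "delete_entry k (rho i (Suc k) p) = p"
proof -
  have "rho i (Suc k) p ! k = i" using assms by (simp add: rho_conv nth_append)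
  moreover have "remove_nth k (rho i (Suc k) p) = map (shift_up i) p"
    using assms by (simp add: rho_conv remove_nth_def)
  ultimately show ?thesis by (simp add: delete_entry_def comp_def)
qed

lemma
  assumes "distinct xs" "k < length xs"
  shows distinct_remove_nth: "distinct (remove_nth k xs)"
    and set_remove_nth: "set (remove_nth k xs) = set xs - {xs ! k}"
proof -
  define A B where "A = take k xs" and "B = drop (Suc k) xs"
  have xs: "xs = A @ xs ! k # B"
    unfolding A_def B_def using assms(2) by (rule id_take_nth_drop)
  have "remove_nth k xs = A @ B" by (simp add: remove_nth_def A_def B_def)
  moreover have "distinct (A @ xs ! k # B)" using assms(1) xs by simp
  moreover have "set xs = insert (xs ! k) (set A \<union> set B)" by (subst xs) auto
  ultimately show "distinct (remove_nth k xs)" "set (remove_nth k xs) = set xs - {xs ! k}"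
    by auto
qed

lemma rho_delete_entry:
  assumes "distinct p" "k < length p"
  shows "rho (p ! k) (Suc k) (delete_entry k p) = p"
proof -
  have "map (shift_up (p ! k)) (delete_entry k p) = remove_nth k p"
    unfolding delete_entry_def map_map
  proof (rule map_idI)
    fix x assume "x \<in> set (remove_nth k p)"
    then show "(shift_up (p ! k) \<circ> shift_down (p ! k)) x = x" using set_remove_nth[OF assms] by simp
  qed
  then show ?thesis
    using assms(2) id_take_nth_drop[OF assms(2)] by (simp add: rho_conv remove_nth_def)
qed

lemma is_perm_delete_entry:
  assumes "is_perm p" "k < length p"
  shows "is_perm (delete_entry k p)"
proof -
  let ?v = "p ! k"
  have p: "distinct p" "set p = {1..length p}" using assms(1) by (auto simp: is_perm_def)
  have "?v \<in> {1..length p}" using assms(2) p(2) nth_mem by blast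
  then have "set (delete_entry k p) = {1..length p - 1}"
    using shift_down_image set_remove_nth[OF p(1) assms(2)] p(2) by (simp add: delete_entry_def)
  moreover have "distinct (delete_entry k p)"
    using distinct_remove_nth[OF p(1) assms(2)] set_remove_nth[OF p(1) assms(2)]
      inj_on_subset[OF inj_on_shift_down] by (auto simp: delete_entry_def distinct_map)
  ultimately show ?thesis using assms(2) by (simp add: is_perm_def)
qed

lemma contains_transfer:
  assumes "contains r q" "strict_mono g" "\<And>i. i < length r \<Longrightarrow> g i < length p"
    and order: "\<And>i j. i < length r \<Longrightarrow> j < length r \<Longrightarrow> r ! i < r ! j \<longleftrightarrow> p ! g i < p ! g j"
  shows "contains p q"
proof -
  obtain idx where idx: "length idx = length q" "sorted_wrt (<) idx" "\<forall>i\<in>set idx. i < length r"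
    "\<forall>a<length q. \<forall>b<length q. r ! (idx ! a) < r ! (idx ! b) \<longleftrightarrow> q ! a < q ! b"
    using assms(1) unfolding contains_def by blast
  have "sorted_wrt (<) (map g idx)"
    using idx(2) strict_monoD[OF assms(2)] unfolding sorted_wrt_map by (rule sorted_wrt_mono_rel[rotated]) simp
  moreover have "\<forall>i\<in>set (map g idx). i < length p" using idx(3) assms(3) by auto
  moreover have "p ! (map g idx ! a) < p ! (map g idx ! b) \<longleftrightarrow> q ! a < q ! b"
    if "a < length q" "b < length q" for a b
    using that idx order[of "idx ! a" "idx ! b"] by (simp add: nth_mem)
  ultimately show ?thesis using idx(1) unfolding contains_def by (metis length_map)
qed

lemma contains_delete_entry:
  assumes "distinct p" "k < length p" "contains (delete_entry k p) q"
  shows "contains p q"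
proof -
  define g where "g i = (if i < k then i else Suc i)" for i
  have g: "g i < length p" "g i \<noteq> k" if "i < length (delete_entry k p)" for i
    using that assms(2) by (auto simp: g_def)
  have entry: "delete_entry k p ! i = shift_down (p ! k) (p ! g i)" "p ! g i \<noteq> p ! k"
    if "i < length (delete_entry k p)" for i
  proof -
    show "delete_entry k p ! i = shift_down (p ! k) (p ! g i)"
      using that assms(2) by (simp add: delete_entry_def remove_nth_def nth_append g_def min_def)
    show "p ! g i \<noteq> p ! k"
      using g[OF that] assms(1,2) nth_eq_iff_index_eq by metis
  qed
  have "strict_mono g" by (auto simp: strict_mono_def g_def)
  moreover note g(1)
  moreover have "delete_entry k p ! i < delete_entry k p ! j \<longleftrightarrow> p ! g i < p ! g j"
    if "i < length (delete_entry k p)" "j < length (delete_entry k p)" for i j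
    using entry[OF that(1)] entry[OF that(2)] by (simp add: shift_down_less_iff)
  ultimately show ?thesis by (rule contains_transfer[OF assms(3)])
qed

lemma rectangular_delete_entry:
  assumes "rectangular p" "k < length p"
  shows "rectangular (delete_entry k p)"
proof -
  have "is_perm p" using assms(1) by (simp add: rectangular_def)
  then have "distinct p" by (simp add: is_perm_def)
  then show ?thesis
    using assms is_perm_delete_entry[OF \<open>is_perm p\<close>] contains_delete_entry
    unfolding rectangular_def avoids_def by blast
qed

lemma contains_length_4I:
  assumes "i0 < i1" "i1 < i2" "i2 < i3" "i3 < length p" "length q = 4"
    "\<forall>a<4. \<forall>b<4. p ! ([i0, i1, i2, i3] ! a) < p ! ([i0, i1, i2, i3] ! b) \<longleftrightarrow> q ! a < q ! b"
  shows "contains p q"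
  unfolding contains_def using assms by (intro exI[of _ "[i0, i1, i2, i3]"]) auto

lemma all_less_4: "(\<forall>a<(4::nat). P a) \<longleftrightarrow> P 0 \<and> P 1 \<and> P 2 \<and> P 3"
  by (auto simp: eval_nat_numeral less_Suc_eq)

lemma is_perm_nth_eqE:
  assumes "is_perm p" "c \<in> {1..length p}"
  obtains j where "j < length p" "p ! j = c"
  using assms by (metis in_set_conv_nth is_perm_def)

lemma rectangular_first_entries_adjacent:
  assumes rect: "rectangular (a # b # p)" and "a \<noteq> 1" "b \<noteq> 1"
  shows "b = a + 1 \<or> a = b + 1"
proof (rule ccontr)
  let ?s = "a # b # p"
  assume not_adjacent: "\<not> (b = a + 1 \<or> a = b + 1)"
  have perm: "is_perm ?s" using rect by (simp add: rectangular_def)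
  then have ab: "a \<in> {1..length ?s}" "b \<in> {1..length ?s}" "a \<noteq> b"
    by (auto simp: is_perm_def)
  define c where "c = min a b + 1"
  have c: "min a b < c" "c < max a b" "c \<in> {1..length ?s}"
    using not_adjacent ab unfolding c_def by auto
  obtain j where j: "j < length ?s" "?s ! j = c" using is_perm_nth_eqE[OF perm c(3)] .
  obtain i where i: "i < length ?s" "?s ! i = 1" using is_perm_nth_eqE[OF perm, of 1] by auto
  have "2 \<le> i" "2 \<le> j" "i \<noteq> j"
    using i j c ab assms(2,3) by (auto simp: nth_Cons split: nat.splits)
  moreover have "\<not> contains ?s [2,4,1,3]" "\<not> contains ?s [2,4,3,1]"
    "\<not> contains ?s [4,2,1,3]" "\<not> contains ?s [4,2,3,1]"
    using rect by (simp_all add: rectangular_def avoids_def)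
  ultimately show False
    using i j c ab assms(2,3)
      contains_length_4I[of 0 1 i j ?s "[2,4,1,3]"] contains_length_4I[of 0 1 j i ?s "[2,4,3,1]"]
      contains_length_4I[of 0 1 i j ?s "[4,2,1,3]"] contains_length_4I[of 0 1 j i ?s "[4,2,3,1]"]
    by (cases "a < b"; cases "i < j") (auto simp: all_less_4)
qed

definition decompose :: "nat list \<Rightarrow> letter \<times> nat list" where
  "decompose s =
     (if s ! 0 = 1 then (L1, delete_entry 0 s)
      else if s ! 1 = s ! 0 + 1 then (Lu, delete_entry 0 s)
      else if s ! 0 = s ! 1 + 1 then (Ld, delete_entry 0 s)
      else (L2, delete_entry 1 s))"

lemma psi_SomeD:
  assumes "psi x p = Some s"
  shows "rectangular p" "length s = Suc (length p)"
  using assms by (cases x; auto split: if_splits)+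

lemma decompose_psi:
  assumes "psi x p = Some s"
  shows "decompose s = (x, p)"
proof -
  have perm: "is_perm p" using psi_SomeD(1)[OF assms] by (simp add: rectangular_def)
  have hd_pos: "0 < hd p" if "p \<noteq> []"
    using perm hd_in_set[OF that] by (auto simp: is_perm_def)
  show ?thesis
  proof (cases x)
    case L1
    then have "s = rho 1 1 p" using assms by (simp split: if_splits)
    then show ?thesis using L1 delete_entry_rho[of 0 p 1] by (simp add: decompose_def rho_conv)
  next
    case L2
    then obtain a p' where p: "p = a # p'" "a \<noteq> 1" and s: "s = rho 1 2 p"
      using assms by (cases p) (auto split: if_splits)
    then have "s ! 0 = a + 1" "s ! 1 = 1" "2 \<le> a"
      using hd_pos by (auto simp: rho_conv shift_up_def)
    moreover have "delete_entry 1 s = p"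
      using s delete_entry_rho[of 1 p 1] p(1) by (simp add: numeral_2_eq_2)
    ultimately show ?thesis using L2 by (simp add: decompose_def)
  next
    case Lu
    then obtain a p' where p: "p = a # p'" "a \<noteq> 1" and s: "s = rho a 1 p"
      using assms by (cases p) (auto split: if_splits)
    then have "s ! 0 = a" "s ! 1 = a + 1" by (simp_all add: rho_conv shift_up_def)
    then show ?thesis using Lu s p(2) delete_entry_rho[of 0 p a] by (simp add: decompose_def)
  next
    case Ld
    then obtain a p' where p: "p = a # p'" and s: "s = rho (a + 1) 1 p"
      using assms by (cases p) (auto split: if_splits)
    then have "s ! 0 = a + 1" "s ! 1 = a" "a \<noteq> 0"
      using hd_pos by (simp_all add: rho_conv shift_up_def)
    then show ?thesis using Ld s delete_entry_rho[of 0 p "a + 1"] by (simp add: decompose_def)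
  qed
qed

lemma psi_decompose:
  assumes rect: "rectangular p" and "p \<noteq> []" and dec: "decompose p = (x, q)"
  shows "psi x q = Some p"
proof -
  have perm: "is_perm p" using rect by (simp add: rectangular_def)
  then have "distinct p" by (simp add: is_perm_def)
  have delete: "rectangular (delete_entry k p)" "rho (p ! k) (Suc k) (delete_entry k p) = p"
    if "k < length p" for k
    using rectangular_delete_entry[OF rect that] rho_delete_entry[OF \<open>distinct p\<close> that] by blast+
  show ?thesis
  proof (cases "p ! 0 = 1")
    case True
    then show ?thesis using dec delete[of 0] \<open>p \<noteq> []\<close> by (auto simp: decompose_def)
  next
    case first_ne_1: False
    obtain a b r where p: "p = a # b # r"
    proof (cases p)
      case (Cons a p')
      moreover have "p' \<noteq> []"
        using perm first_ne_1 Cons by (auto simp: is_perm_def)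
      ultimately show ?thesis using that by (cases p') auto
    qed (use \<open>p \<noteq> []\<close> in simp)
    have "1 \<le> a" using perm p by (auto simp: is_perm_def)
    have delete_0: "delete_entry 0 p = shift_down a b # map (shift_down a) r"
      and delete_1: "delete_entry 1 p = shift_down b a # map (shift_down b) r"
      by (simp_all add: p delete_entry_def remove_nth_def)
    consider (up) "b = a + 1" | (down) "a = b + 1" | (two) "b = 1" "a \<noteq> 2"
      using rectangular_first_entries_adjacent[of a b r] rect first_ne_1 p by fastforce
    then show ?thesis
    proof cases
      case up
      then have "decompose p = (Lu, delete_entry 0 p)" using first_ne_1 p by (simp add: decompose_def)
      then show ?thesis
        using dec delete[of 0] first_ne_1 up p delete_0 by (auto simp: shift_down_def)
    next
      case down
      then have "decompose p = (Ld, delete_entry 0 p)" using first_ne_1 p by (simp add: decompose_def)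
      then show ?thesis
        using dec delete[of 0] down p delete_0 by (auto simp: shift_down_def)
    next
      case two
      then have "decompose p = (L2, delete_entry 1 p)"
        using first_ne_1 p \<open>1 \<le> a\<close> by (simp add: decompose_def)
      moreover have "hd (delete_entry 1 p) \<noteq> 1"
        using p two first_ne_1 \<open>1 \<le> a\<close> delete_1 by (simp add: shift_down_def)
      ultimately show ?thesis
        using dec delete[of 1] two p delete_1 by (auto simp: numeral_2_eq_2)
    qed
  qed
qed

lemma run_snoc: "run (xs @ [x]) = Option.bind (run xs) (psi x)"
  by (simp add: run_def)

lemma run_snoc_eq_Some:
  "run (xs @ [x]) = Some s \<longleftrightarrow> (\<exists>p. run xs = Some p \<and> psi x p = Some s)"
  by (cases "run xs") (simp_all add: run_snoc)

lemma run_eq_Some_Nil: "run xs = Some [] \<longleftrightarrow> xs = []"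
proof
  assume "run xs = Some []"
  then show "xs = []"
    by (cases xs rule: rev_cases) (auto simp: run_snoc_eq_Some dest: psi_SomeD(2))
qed (simp add: run_def)

lemma run_inj:
  assumes "run xs = Some s" "run ys = Some s"
  shows "xs = ys"
  using assms
proof (induction xs arbitrary: ys s rule: rev_induct)
  case Nil
  then have "s = []" by (simp add: run_def)
  then show ?case using Nil.prems(2) by (simp add: run_eq_Some_Nil)
next
  case (snoc x xs)
  then obtain p where p: "run xs = Some p" "psi x p = Some s" by (auto simp: run_snoc_eq_Some)
  then have "ys \<noteq> []" using snoc.prems(2) psi_SomeD(2)[OF p(2)] by (auto simp: run_def)
  then obtain ys' y where ys: "ys = ys' @ [y]" by (cases ys rule: rev_cases) auto
  then obtain q where q: "run ys' = Some q" "psi y q = Some s"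
    using snoc.prems(2) by (auto simp: run_snoc_eq_Some)
  have "(x, p) = (y, q)" using decompose_psi[OF p(2)] decompose_psi[OF q(2)] by simp
  then show ?case using snoc.IH[OF p(1)] q(1) ys by simp
qed

lemma run_exists_if_rectangular:
  assumes "rectangular p"
  shows "\<exists>xs. run xs = Some p"
  using assms
proof (induction "length p" arbitrary: p rule: less_induct)
  case less
  show ?case
  proof (cases "p = []")
    case True
    then show ?thesis by (metis run_eq_Some_Nil)
  next
    case False
    obtain x q where dec: "decompose p = (x, q)" by fastforce
    then have step: "psi x q = Some p" using psi_decompose less.prems False by blast
    then obtain xs where "run xs = Some q" using less psi_SomeD[OF step] by (metis lessI)
    then have "run (xs @ [x]) = Some p" using step by (simp add: run_snoc)
    then show ?thesis by blast
  qed
qed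

theorem corollary4p3:
  fixes \<pi> :: "nat list"
  assumes "rectangular \<pi>"
  shows "\<exists>!xs :: letter list. run xs = Some \<pi>"
  using run_exists_if_rectangular[OF assms] run_inj by blast

end
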